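(* Let $n\ge 2$ and $k>0$. Then $\mathbf{H}$ is $(k,\dots,k)$-increasing: $\mathbf{H}(\mathbf{x})\le\mathbf{H}(x_1+tk,\dots,x_n+tk)$ for all $\mathbf{x}\in[0,1]^n$ and $t>0$ with $(x_1+tk,\dots,x_n+tk)\in[0,1]^n$.
   Context: For $\mathbf{x}\in[0,1]^n$ let $x_{(1)}\ge\dots\ge x_{(n)}$ be its entries in decreasing order, and define the median $Med(\mathbf{x})=\frac12(x_{(k)}+x_{(k+1)})$ if $n=2k$ and $Med(\mathbf{x})=x_{(k+1)}$ if $n=2k+1$ (here $k$ is just the index for the median). Define $f_i(\mathbf{x})=\frac1n$ if $x_1=\dots=x_n$, and otherwise $f_i(\mathbf{x})=\frac{1}{n-1}\Big(1-\frac{|x_i-Med(\mathbf{x})|}{\sum_{j=1}^n|x_j-Med(\mathbf{x})|}\Big)$. Then $\mathbf{H}(\mathbf{x})=\sum_{i=1}^n f_i(\mathbf{x})\,x_i$. *)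

theory Defs
  imports "HOL-Analysis.Analysis"
begin

text \<open>Vectors x in [0,1]^n are represented as functions nat => real, using
coordinates 0..n-1 (paper's x_1..x_n).\<close>

definition med :: "nat \<Rightarrow> (nat \<Rightarrow> real) \<Rightarrow> real" where
  "med n x = (let s = rev (sort (map x [0..<n])); k = n div 2 in
     if even n then (s ! (k - 1) + s ! k) / 2 else s ! k)"

definition fw :: "nat \<Rightarrow> (nat \<Rightarrow> real) \<Rightarrow> nat \<Rightarrow> real" where
  "fw n x i = (if (\<forall>j<n. x j = x 0) then 1 / real n
     else (1 / (real n - 1)) * (1 - \<bar>x i - med n x\<bar> / (\<Sum>j<n. \<bar>x j - med n x\<bar>)))"

definition H :: "nat \<Rightarrow> (nat \<Rightarrow> real) \<Rightarrow> real" where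
  "H n x = (\<Sum>i<n. fw n x i * x i)"

end

theory Submission
  imports Defs
begin

text \<open>Translating every coordinate by \<open>c\<close> translates the median by \<open>c\<close> and therefore
leaves all weights \<open>f\<^sub>i\<close> unchanged, so \<open>H(x + c) = H(x) + c \<Sum>\<^sub>i f\<^sub>i(x)\<close>.
Since the weights are nonnegative, \<open>H\<close> increases along the diagonal.\<close>

lemma sort_map_mono:
  fixes f :: "'a::linorder \<Rightarrow> 'b::linorder"
  assumes "mono f"
  shows "sort (map f xs) = map f (sort xs)"
proof (rule properties_for_sort)
  show "mset (map f (sort xs)) = mset (map f xs)" by simp
  show "sorted (map f (sort xs))"
    using assms by (intro sorted_map_mono) (auto intro: mono_on_subset)
qed

lemma med_shift:
  assumes "0 < n"
  shows "med n (\<lambda>i. x i + c) = med n x + c"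
proof -
  define s where "s = rev (sort (map x [0..<n]))"
  have "mono (\<lambda>v::real. v + c)" by (simp add: monoI)
  from sort_map_mono[OF this, of "map x [0..<n]"]
  have shifted: "rev (sort (map (\<lambda>i. x i + c) [0..<n])) = map (\<lambda>v. v + c) s"
    unfolding s_def by (simp add: o_def rev_map)
  have "length s = n" by (simp add: s_def)
  then have "n div 2 < length s" "n div 2 - 1 < length s" using assms by simp_all
  then show ?thesis
    unfolding med_def Let_def shifted s_def[symmetric] by (simp add: field_simps)
qed

lemma fw_shift:
  assumes "0 < n"
  shows "fw n (\<lambda>i. x i + c) i = fw n x i"
  unfolding fw_def med_shift[OF assms] add_diff_add diff_self add_0_right by simp

lemma H_shift:
  assumes "0 < n"
  shows "H n (\<lambda>i. x i + c) = H n x + c * (\<Sum>i<n. fw n x i)"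
  unfolding H_def fw_shift[OF assms]
  by (simp add: distrib_left sum.distrib sum_distrib_left mult.commute)

lemma fw_nonneg:
  assumes "i < n"
  shows "0 \<le> fw n x i"
proof (cases "\<forall>j<n. x j = x 0")
  case const: True
  \<comment> \<open>The constancy hypothesis must not reach the simplifier: it rewrites \<open>x 0\<close> to itself forever.\<close>
  show ?thesis unfolding fw_def if_P[OF const] by simp
next
  case nonconstant: False
  then obtain j where "j < n" "x j \<noteq> x 0" by blast
  then have "1 < real n" by (cases j) auto
  let ?S = "\<Sum>j<n. \<bar>x j - med n x\<bar>"
  have "\<bar>x i - med n x\<bar> \<le> ?S"
    using assms by (intro member_le_sum) auto
  then have "\<bar>x i - med n x\<bar> / ?S \<le> 1"
    by (cases "?S = 0") (simp_all add: divide_le_eq_1 less_le)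
  with \<open>1 < real n\<close> show ?thesis
    unfolding fw_def if_not_P[OF nonconstant] by (intro mult_nonneg_nonneg) simp_all
qed

theorem proposition18:
  fixes n :: nat and k t :: real and x :: "nat \<Rightarrow> real"
  assumes "n \<ge> 2" and "k > 0" and "t > 0"
    and "\<forall>i<n. 0 \<le> x i \<and> x i \<le> 1"
    and "\<forall>i<n. 0 \<le> x i + t * k \<and> x i + t * k \<le> 1"
  shows "H n x \<le> H n (\<lambda>i. x i + t * k)"
proof -
  have "0 \<le> t * k * (\<Sum>i<n. fw n x i)"
    using assms(2,3) by (intro mult_nonneg_nonneg sum_nonneg fw_nonneg) auto
  with assms(1) show ?thesis by (simp add: H_shift)
qed

end
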